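(* Let $\langle X, d\rangle$ be a metric space. The following conditions are equivalent: (1) $X$ is cofinally Bourbaki quasi-complete; (2) $X$ is strongly uniformly locally bounded and, for every metric space $\langle Y,\rho\rangle$, every locally Lipschitz function $f: X\to Y$ is strongly uniformly locally Lipschitz; (3) $X$ is strongly uniformly locally bounded and every real-valued locally Lipschitz function on $X$ is strongly uniformly locally Lipschitz; (4) $X$ is strongly uniformly locally bounded and the real-valued strongly uniformly locally Lipschitz functions on $X$ are uniformly dense in $C(X,\mathbb{R})$, the set of all real-valued continuous functions on $X$.
   Context: For $\varepsilon>0$ and $x,y\in X$, an $\varepsilon$-chain from $x$ to $y$ is a finite sequence $x=x_0,x_1,\dots,x_n=y$ in $X$ with $d(x_{i-1},x_i)<\varepsilon$ for all $i$. The $\varepsilon$-chainable component $S^\infty_d(x,\varepsilon)$ is the set of all $y\in X$ that can be joined to $x$ by an $\varepsilon$-chain. A sequence $\langle x_n\rangle$ in $X$ is cofinally Bourbaki quasi-Cauchy if for every $\varepsilon>0$ there is an infinite set $N_\varepsilon\subseteq\mathbb{N}$ such that for all $j,k\in N_\varepsilon$, $x_j$ and $x_k$ can be joined by an $\varepsilon$-chain. $X$ is cofinally Bourbaki quasi-complete if every cofinally Bourbaki quasi-Cauchy sequence in $X$ has a cluster point. $X$ is strongly uniformly locally bounded if there is $\delta>0$ such that $S^\infty_d(x,\delta)$ is a bounded subset of $X$ for every $x\in X$. A function $f:X\to Y$ into a metric space $\langle Y,\rho\rangle$ is locally Lipschitz if each $x\in X$ has a ball $S_d(x,\delta_x)$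 on which $f$ is Lipschitz; $f$ is strongly uniformly locally Lipschitz (also called uniformly locally chain-Lipschitz) if there exists $\delta>0$ such that for each $x\in X$ the restriction of $f$ to $S^\infty_d(x,\delta)$ is Lipschitz (the Lipschitz constant may depend on $x$). Uniform density means density with respect to uniform (sup-norm) convergence. *)

theory Defs
  imports "HOL-Analysis.Analysis"
begin

definition eps_chain :: "'a metric \<Rightarrow> real \<Rightarrow> 'a \<Rightarrow> 'a \<Rightarrow> bool" where
  "eps_chain X e x y \<longleftrightarrow>
     (\<exists>(n::nat) (p::nat \<Rightarrow> 'a). p 0 = x \<and> p n = y \<and> (\<forall>i\<le>n. p i \<in> mspace X) \<and>
        (\<forall>i<n. mdist X (p i) (p (Suc i)) < e))"

definition chain_comp :: "'a metric \<Rightarrow> 'a \<Rightarrow> real \<Rightarrow> 'a set" where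
  "chain_comp X x e = {y \<in> mspace X. eps_chain X e x y}"

definition cofinally_Bourbaki_quasi_Cauchy :: "'a metric \<Rightarrow> (nat \<Rightarrow> 'a) \<Rightarrow> bool" where
  "cofinally_Bourbaki_quasi_Cauchy X s \<longleftrightarrow>
     (\<forall>e>0. \<exists>N::nat set. infinite N \<and> (\<forall>j\<in>N. \<forall>k\<in>N. eps_chain X e (s j) (s k)))"

definition cluster_point :: "'a metric \<Rightarrow> (nat \<Rightarrow> 'a) \<Rightarrow> 'a \<Rightarrow> bool" where
  "cluster_point X s p \<longleftrightarrow> p \<in> mspace X \<and>
     (\<forall>e>0. \<forall>n. \<exists>k\<ge>n. mdist X (s k) p < e)"

definition cofinally_Bourbaki_quasi_complete :: "'a metric \<Rightarrow> bool" where
  "cofinally_Bourbaki_quasi_complete X \<longleftrightarrow>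
     (\<forall>s. range s \<subseteq> mspace X \<and> cofinally_Bourbaki_quasi_Cauchy X s \<longrightarrow>
          (\<exists>p. cluster_point X s p))"

definition strongly_uniformly_locally_bounded :: "'a metric \<Rightarrow> bool" where
  "strongly_uniformly_locally_bounded X \<longleftrightarrow>
     (\<exists>\<delta>>0. \<forall>x\<in>mspace X. Metric_space.mbounded (mspace X) (mdist X) (chain_comp X x \<delta>))"

definition locally_Lipschitz :: "'a metric \<Rightarrow> 'b metric \<Rightarrow> ('a \<Rightarrow> 'b) \<Rightarrow> bool" where
  "locally_Lipschitz X Y f \<longleftrightarrow> f \<in> mspace X \<rightarrow> mspace Y \<and>
     (\<forall>x\<in>mspace X. \<exists>\<delta>>0. Lipschitz_continuous_map (submetric X (mball_of X x \<delta>)) Y f)"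

definition strongly_uniformly_locally_Lipschitz :: "'a metric \<Rightarrow> 'b metric \<Rightarrow> ('a \<Rightarrow> 'b) \<Rightarrow> bool" where
  "strongly_uniformly_locally_Lipschitz X Y f \<longleftrightarrow> f \<in> mspace X \<rightarrow> mspace Y \<and>
     (\<exists>\<delta>>0. \<forall>x\<in>mspace X. Lipschitz_continuous_map (submetric X (chain_comp X x \<delta>)) Y f)"

text \<open>Condition (2), for target metric spaces whose points live in type \<open>'b\<close>.\<close>
definition cond2 :: "'a metric \<Rightarrow> 'b itself \<Rightarrow> bool" where
  "cond2 X (T::'b itself) \<longleftrightarrow> strongly_uniformly_locally_bounded X \<and>
     (\<forall>(Y::'b metric) f. locally_Lipschitz X Y f \<longrightarrow> strongly_uniformly_locally_Lipschitz X Y f)"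

end

theory Submission
  imports Defs
begin

text \<open>
  If \<open>X\<close> is cofinally Bourbaki quasi-complete, a locally Lipschitz map is bounded and Lipschitz on
  all \<open>\<delta>\<close>-chainable components for some uniform \<open>\<delta>\<close>: otherwise witnesses found in ever finer
  components form a double sequence whose \<open>n\<close>-th row is \<open>1/(n+1)\<close>-chained and which, by local
  Lipschitzness, accumulates nowhere; enumerated, it is a cofinally Bourbaki quasi-Cauchy sequence
  without cluster point. Applied to the identity this gives strong uniform local boundedness, and
  combined with the uniform density of locally Lipschitz functions in \<open>C(X)\<close> it gives the density
  of the strongly uniformly locally Lipschitz ones.

  Conversely, let \<open>X\<close> be strongly uniformly locally bounded and let \<open>(s\<^sub>n)\<close> be a cofinally Bourbaki
  quasi-Cauchy sequence without cluster point. Then \<open>f = sup\<^sub>n max 0 (n - n\<^sup>2 d(-, s\<^sub>n))\<close> is locally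
  Lipschitz with \<open>f(s\<^sub>n) \<ge> n\<close>. A strongly uniformly locally Lipschitz function is bounded on the
  bounded chainable component containing infinitely many \<open>s\<^sub>n\<close>, so it stays at uniform distance
  at least \<open>1\<close> from \<open>f\<close>.
\<close>

section \<open>Chains and chainable components\<close>

lemma mdist_self [simp]: "x \<in> mspace m \<Longrightarrow> mdist m x x = 0"
  by simp

definition eps_step :: "'a metric \<Rightarrow> real \<Rightarrow> 'a \<Rightarrow> 'a \<Rightarrow> bool" where
  "eps_step X e x y \<longleftrightarrow> x \<in> mspace X \<and> y \<in> mspace X \<and> mdist X x y < e"

lemma eps_chain_iff_rtranclp:
  "eps_chain X e x y \<longleftrightarrow> x \<in> mspace X \<and> (eps_step X e)\<^sup>*\<^sup>* x y"
proof
  assume "eps_chain X e x y"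
  then obtain n p where p: "p 0 = x" "p n = y" "\<forall>i\<le>n. p i \<in> mspace X"
    "\<forall>i<n. mdist X (p i) (p (Suc i)) < e"
    unfolding eps_chain_def by blast
  then have "(eps_step X e ^^ n) x y"
    unfolding relpowp_fun_conv eps_step_def by (auto intro!: exI[of _ p])
  then show "x \<in> mspace X \<and> (eps_step X e)\<^sup>*\<^sup>* x y"
    using p by (auto simp: rtranclp_power)
next
  assume "x \<in> mspace X \<and> (eps_step X e)\<^sup>*\<^sup>* x y"
  then obtain n p where x: "x \<in> mspace X" and p: "p 0 = x" "p n = y"
    "\<forall>i<n. eps_step X e (p i) (p (Suc i))"
    unfolding rtranclp_power relpowp_fun_conv by blast
  have "p i \<in> mspace X" if "i \<le> n" for i
  proof (cases i)
    case (Suc j)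
    then show ?thesis
      using p(3) that unfolding eps_step_def by auto
  qed (use x p(1) in simp)
  with p show "eps_chain X e x y"
    unfolding eps_chain_def eps_step_def by (intro exI[of _ n] exI[of _ p]) simp
qed

lemma eps_chain_mspace: "eps_chain X e x y \<Longrightarrow> x \<in> mspace X \<and> y \<in> mspace X"
  unfolding eps_chain_def by auto

lemma eps_chain_sym:
  assumes "eps_chain X e x y"
  shows "eps_chain X e y x"
proof -
  have "symp (eps_step X e)"
    by (auto intro: sympI simp: eps_step_def mdist_commute)
  then have "(eps_step X e)\<^sup>*\<^sup>* y x"
    using assms by (auto simp: eps_chain_iff_rtranclp intro: sympD[OF symp_rtranclp])
  moreover have "y \<in> mspace X"
    using eps_chain_mspace[OF assms] by simp
  ultimately show ?thesis
    by (simp add: eps_chain_iff_rtranclp)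
qed

lemma eps_chain_trans: "eps_chain X e x y \<Longrightarrow> eps_chain X e y z \<Longrightarrow> eps_chain X e x z"
  unfolding eps_chain_iff_rtranclp using rtranclp_trans[of "eps_step X e" x y z] by blast

lemma eps_chain_mono: "eps_chain X e x y \<Longrightarrow> e \<le> e' \<Longrightarrow> eps_chain X e' x y"
proof -
  assume "e \<le> e'"
  then have "eps_step X e \<le> eps_step X e'"
    by (auto simp: eps_step_def)
  then show "eps_chain X e x y \<Longrightarrow> eps_chain X e' x y"
    unfolding eps_chain_iff_rtranclp using rtranclp_mono by blast
qed

lemma chain_comp_mspace: "y \<in> chain_comp X x e \<Longrightarrow> y \<in> mspace X"
  unfolding chain_comp_def by blast

lemma chain_comp_mono: "e \<le> e' \<Longrightarrow> chain_comp X x e \<subseteq> chain_comp X x e'"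
  unfolding chain_comp_def by (auto elim: eps_chain_mono)

lemma chain_comp_eps_chain:
  assumes "y \<in> chain_comp X x e" and "z \<in> chain_comp X x e"
  shows "eps_chain X e y z"
proof -
  have "eps_chain X e x y" and "eps_chain X e x z"
    using assms by (simp_all add: chain_comp_def)
  then show ?thesis
    by (rule eps_chain_trans[OF eps_chain_sym])
qed

section \<open>Double sequences that refute cofinal Bourbaki quasi-completeness\<close>

lemma finite_nat_pairs_sum_less: "finite {(n :: nat, k :: nat). real n + real k < C}"
proof -
  have bound: "m \<le> nat \<lceil>C\<rceil>" if "real m < C" for m :: nat
  proof -
    have "real m \<le> real (nat \<lceil>C\<rceil>)"
      using that real_nat_ceiling_ge[of C] by linarith
    then show ?thesis
      by (simp only: of_nat_le_iff)
  qed
  have "n \<le> nat \<lceil>C\<rceil> \<and> k \<le> nat \<lceil>C\<rceil>" if "real n + real k < C" for n k :: nat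
  proof -
    from that have "real n < C" "real k < C"
      by linarith+
    then show ?thesis
      using bound by simp
  qed
  then have "{(n, k). real n + real k < C} \<subseteq> {..nat \<lceil>C\<rceil>} \<times> {..nat \<lceil>C\<rceil>}"
    by auto
  then show ?thesis
    by (rule finite_subset) simp
qed

lemma cofinally_Bourbaki_quasi_Cauchy_row_enumeration:
  fixes t :: "nat \<Rightarrow> nat \<Rightarrow> 'a"
  assumes rows_chained: "\<And>n j k. eps_chain X (1 / real (Suc n)) (t n j) (t n k)"
  shows "cofinally_Bourbaki_quasi_Cauchy X (\<lambda>m. case_prod t (prod_decode m))"
  unfolding cofinally_Bourbaki_quasi_Cauchy_def
proof (intro allI impI)
  fix e :: real
  assume "e > 0"
  then obtain n where n: "1 / real (Suc n) < e"
    by (rule nat_approx_posE)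
  have "inj (\<lambda>k. prod_encode (n, k))"
    by (simp add: inj_on_def)
  then have "infinite (range (\<lambda>k. prod_encode (n, k)))"
    by (rule range_inj_infinite)
  moreover have "eps_chain X e (case_prod t (prod_decode j)) (case_prod t (prod_decode k))"
    if jk: "j \<in> range (\<lambda>k. prod_encode (n, k))" "k \<in> range (\<lambda>k. prod_encode (n, k))" for j k
  proof -
    obtain a b where "j = prod_encode (n, a)" "k = prod_encode (n, b)"
      using jk by blast
    then show ?thesis
      using eps_chain_mono[OF rows_chained less_imp_le[OF n]] by simp
  qed
  ultimately show "\<exists>N. infinite N \<and>
      (\<forall>j\<in>N. \<forall>k\<in>N. eps_chain X e (case_prod t (prod_decode j)) (case_prod t (prod_decode k)))"
    by blast
qed

lemma not_cofinally_Bourbaki_quasi_completeI: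
  fixes t :: "nat \<Rightarrow> nat \<Rightarrow> 'a"
  assumes t_mspace: "\<And>n k. t n k \<in> mspace X"
    and rows_chained: "\<And>n j k. eps_chain X (1 / real (Suc n)) (t n j) (t n k)"
    and locally_finite: "\<And>p. p \<in> mspace X \<Longrightarrow> \<exists>e>0. finite {(n, k). mdist X (t n k) p < e}"
  shows "\<not> cofinally_Bourbaki_quasi_complete X"
proof
  assume complete: "cofinally_Bourbaki_quasi_complete X"
  define s where "s = (\<lambda>m. case_prod t (prod_decode m))"
  have "range s \<subseteq> mspace X"
    using t_mspace by (auto simp: s_def split: prod.splits)
  moreover have "cofinally_Bourbaki_quasi_Cauchy X s"
    unfolding s_def by (rule cofinally_Bourbaki_quasi_Cauchy_row_enumeration[OF rows_chained])
  ultimately obtain p where p: "cluster_point X s p"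
    using complete unfolding cofinally_Bourbaki_quasi_complete_def by blast
  then obtain e where "e > 0" and finite_near: "finite {(n, k). mdist X (t n k) p < e}"
    using locally_finite unfolding cluster_point_def by blast
  have "{m. mdist X (s m) p < e} \<subseteq> prod_encode ` {(n, k). mdist X (t n k) p < e}"
  proof
    fix m
    assume "m \<in> {m. mdist X (s m) p < e}"
    moreover obtain n k where nk: "prod_decode m = (n, k)"
      by fastforce
    ultimately have "mdist X (t n k) p < e"
      by (simp add: s_def)
    moreover have "m = prod_encode (n, k)"
      by (metis nk prod_decode_inverse)
    ultimately show "m \<in> prod_encode ` {(n, k). mdist X (t n k) p < e}"
      by blast
  qed
  then have "finite {m. mdist X (s m) p < e}"
    by (rule finite_surj[OF finite_near])
  moreover have "infinite {m. mdist X (s m) p < e}"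
    using p \<open>e > 0\<close> unfolding cluster_point_def infinite_nat_iff_unbounded_le by simp
  ultimately show False
    by contradiction
qed

section \<open>Locally Lipschitz maps\<close>

lemma locally_Lipschitz_mspace:
  "locally_Lipschitz X Y f \<Longrightarrow> x \<in> mspace X \<Longrightarrow> f x \<in> mspace Y"
  unfolding locally_Lipschitz_def by blast

lemma locally_LipschitzE:
  assumes "locally_Lipschitz X Y f" and "p \<in> mspace X"
  obtains r L where "r > 0" "L > 0"
    "\<And>a b. a \<in> mspace X \<Longrightarrow> b \<in> mspace X \<Longrightarrow> mdist X p a < r \<Longrightarrow> mdist X p b < r \<Longrightarrow>
       mdist Y (f a) (f b) \<le> L * mdist X a b"
proof -
  obtain r where "r > 0" and "Lipschitz_continuous_map (submetric X (mball_of X p r)) Y f"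
    using assms unfolding locally_Lipschitz_def by blast
  then obtain L where "L > 0" and "\<forall>a\<in>mball_of X p r \<inter> mspace X. \<forall>b\<in>mball_of X p r \<inter> mspace X.
      mdist Y (f a) (f b) \<le> L * mdist X a b"
    unfolding Lipschitz_continuous_map_pos by auto
  with \<open>r > 0\<close> assms(2) show thesis
    by (intro that[of r L]) auto
qed

lemma locally_Lipschitz_continuous_at:
  assumes "locally_Lipschitz X Y f" and "p \<in> mspace X" and "\<epsilon> > 0"
  obtains \<delta> where "\<delta> > 0" "\<And>a. a \<in> mspace X \<Longrightarrow> mdist X p a < \<delta> \<Longrightarrow> mdist Y (f p) (f a) < \<epsilon>"
proof -
  obtain r L where "r > 0" "L > 0" and Lip:
    "\<And>a b. a \<in> mspace X \<Longrightarrow> b \<in> mspace X \<Longrightarrow> mdist X p a < r \<Longrightarrow> mdist X p b < r \<Longrightarrow>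
       mdist Y (f a) (f b) \<le> L * mdist X a b"
    using locally_LipschitzE[OF assms(1,2)] by metis
  show thesis
  proof (rule that[of "min r (\<epsilon> / L)"])
    show "min r (\<epsilon> / L) > 0"
      using \<open>r > 0\<close> \<open>L > 0\<close> \<open>\<epsilon> > 0\<close> by simp
    fix a
    assume a: "a \<in> mspace X" "mdist X p a < min r (\<epsilon> / L)"
    have "mdist Y (f p) (f a) \<le> L * mdist X p a"
      using Lip[OF assms(2) a(1)] a(2) \<open>r > 0\<close> assms(2) by simp
    also have "\<dots> < L * (\<epsilon> / L)"
      using a(2) \<open>L > 0\<close> by (intro mult_strict_left_mono) auto
    finally show "mdist Y (f p) (f a) < \<epsilon>"
      using \<open>L > 0\<close> by simp
  qed
qed

lemma locally_Lipschitz_imp_continuous_map: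
  assumes "locally_Lipschitz X Y f"
  shows "continuous_map (mtopology_of X) (mtopology_of Y) f"
  unfolding mtopology_of_def
    Metric_space.metric_continuous_map[OF Metric_space_mspace_mdist Metric_space_mspace_mdist]
proof (intro conjI ballI allI impI)
  show "f ` mspace X \<subseteq> mspace Y"
    using locally_Lipschitz_mspace[OF assms] by blast
  fix a and \<epsilon> :: real
  assume "a \<in> mspace X" and "\<epsilon> > 0"
  then obtain \<delta> where "\<delta> > 0" "\<And>x. x \<in> mspace X \<Longrightarrow> mdist X a x < \<delta> \<Longrightarrow> mdist Y (f a) (f x) < \<epsilon>"
    using locally_Lipschitz_continuous_at[OF assms] by metis
  then show "\<exists>\<delta>>0. \<forall>x. x \<in> mspace X \<and> mdist X a x < \<delta> \<longrightarrow> mdist Y (f a) (f x) < \<epsilon>"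
    by blast
qed

lemma locally_Lipschitz_id: "locally_Lipschitz X X (\<lambda>x. x)"
  unfolding locally_Lipschitz_def
  by (auto intro!: exI[of _ 1] Lipschitz_continuous_map_from_submetric Lipschitz_continuous_map_id)

lemma locally_Lipschitz_const: "c \<in> mspace Y \<Longrightarrow> locally_Lipschitz X Y (\<lambda>x. c)"
  unfolding locally_Lipschitz_def Lipschitz_continuous_map_const by (auto intro: exI[of _ 1])

lemma Lipschitz_continuous_map_real_add:
  fixes f g :: "'a \<Rightarrow> real"
  assumes "Lipschitz_continuous_map X euclidean_metric f"
    and "Lipschitz_continuous_map X euclidean_metric g"
  shows "Lipschitz_continuous_map X euclidean_metric (\<lambda>x. f x + g x)"
proof -
  obtain B C where
    B: "\<forall>x\<in>mspace X. \<forall>y\<in>mspace X. dist (f x) (f y) \<le> B * mdist X x y" and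
    C: "\<forall>x\<in>mspace X. \<forall>y\<in>mspace X. dist (g x) (g y) \<le> C * mdist X x y"
    using assms unfolding Lipschitz_continuous_map_def by auto
  have "dist (f x + g x) (f y + g y) \<le> (B + C) * mdist X x y"
    if "x \<in> mspace X" "y \<in> mspace X" for x y
  proof -
    have "dist (f x) (f y) \<le> B * mdist X x y" "dist (g x) (g y) \<le> C * mdist X x y"
      using B C that by blast+
    then show ?thesis
      unfolding distrib_right using dist_triangle_add[of "f x" "g x" "f y" "g y"] by linarith
  qed
  then show ?thesis
    unfolding Lipschitz_continuous_map_def by (intro conjI exI[of _ "B + C"]) auto
qed

lemma Lipschitz_continuous_map_real_cmult:
  fixes f :: "'a \<Rightarrow> real"
  assumes "Lipschitz_continuous_map X euclidean_metric f"
  shows "Lipschitz_continuous_map X euclidean_metric (\<lambda>x. c * f x)"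
proof -
  obtain B where B: "\<forall>x\<in>mspace X. \<forall>y\<in>mspace X. dist (f x) (f y) \<le> B * mdist X x y"
    using assms unfolding Lipschitz_continuous_map_def by auto
  have "dist (c * f x) (c * f y) \<le> (\<bar>c\<bar> * B) * mdist X x y"
    if "x \<in> mspace X" "y \<in> mspace X" for x y
  proof -
    have "dist (c * f x) (c * f y) = \<bar>c\<bar> * dist (f x) (f y)"
      by (simp add: dist_real_def abs_mult flip: right_diff_distrib)
    also have "\<dots> \<le> \<bar>c\<bar> * (B * mdist X x y)"
      using B that by (intro mult_left_mono) auto
    finally show ?thesis
      by (simp add: mult.assoc)
  qed
  then show ?thesis
    unfolding Lipschitz_continuous_map_def by (intro conjI exI[of _ "\<bar>c\<bar> * B"]) auto
qed

lemma locally_Lipschitz_add: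
  fixes f g :: "'a \<Rightarrow> real"
  assumes f: "locally_Lipschitz X euclidean_metric f" and g: "locally_Lipschitz X euclidean_metric g"
  shows "locally_Lipschitz X euclidean_metric (\<lambda>x. f x + g x)"
  unfolding locally_Lipschitz_def
proof (intro conjI ballI)
  fix x
  assume "x \<in> mspace X"
  then obtain r s where "r > 0" "s > 0"
    and f_Lip: "Lipschitz_continuous_map (submetric X (mball_of X x r)) euclidean_metric f"
    and g_Lip: "Lipschitz_continuous_map (submetric X (mball_of X x s)) euclidean_metric g"
    using f g unfolding locally_Lipschitz_def by meson
  have "Lipschitz_continuous_map (submetric X (mball_of X x (min r s))) euclidean_metric f"
    by (rule Lipschitz_continuous_map_from_submetric_mono[OF f_Lip]) auto
  moreover have "Lipschitz_continuous_map (submetric X (mball_of X x (min r s))) euclidean_metric g"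
    by (rule Lipschitz_continuous_map_from_submetric_mono[OF g_Lip]) auto
  ultimately have "Lipschitz_continuous_map (submetric X (mball_of X x (min r s))) euclidean_metric
      (\<lambda>x. f x + g x)"
    by (rule Lipschitz_continuous_map_real_add)
  then show "\<exists>\<delta>>0. Lipschitz_continuous_map (submetric X (mball_of X x \<delta>)) euclidean_metric
      (\<lambda>x. f x + g x)"
    using \<open>r > 0\<close> \<open>s > 0\<close> by (intro exI[of _ "min r s"]) simp
qed simp

lemma locally_Lipschitz_cmult:
  fixes f :: "'a \<Rightarrow> real"
  assumes "locally_Lipschitz X euclidean_metric f"
  shows "locally_Lipschitz X euclidean_metric (\<lambda>x. c * f x)"
  unfolding locally_Lipschitz_def
proof (intro conjI ballI)
  fix x
  assume "x \<in> mspace X"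
  then obtain r where "r > 0" "Lipschitz_continuous_map (submetric X (mball_of X x r)) euclidean_metric f"
    using assms unfolding locally_Lipschitz_def by blast
  then show "\<exists>\<delta>>0. Lipschitz_continuous_map (submetric X (mball_of X x \<delta>)) euclidean_metric
      (\<lambda>x. c * f x)"
    using Lipschitz_continuous_map_real_cmult by blast
qed simp

lemma locally_Lipschitz_locally_eq:
  assumes "\<And>x. x \<in> mspace X \<Longrightarrow>
    \<exists>h \<delta>. \<delta> > 0 \<and> locally_Lipschitz X Y h \<and> (\<forall>y\<in>mball_of X x \<delta>. g y = h y)"
  shows "locally_Lipschitz X Y g"
  unfolding locally_Lipschitz_def
proof (intro conjI ballI)
  show "g \<in> mspace X \<rightarrow> mspace Y"
  proof
    fix x
    assume x: "x \<in> mspace X"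
    then obtain h \<delta> where "\<delta> > 0" and h: "locally_Lipschitz X Y h"
      and eq: "\<forall>y\<in>mball_of X x \<delta>. g y = h y"
      using assms by blast
    have "x \<in> mball_of X x \<delta>"
      using x \<open>\<delta> > 0\<close> by simp
    with eq have "g x = h x"
      by blast
    then show "g x \<in> mspace Y"
      using locally_Lipschitz_mspace[OF h x] by simp
  qed
  fix x
  assume x: "x \<in> mspace X"
  then obtain h \<delta> where "\<delta> > 0" and h: "locally_Lipschitz X Y h"
    and eq: "\<forall>y\<in>mball_of X x \<delta>. g y = h y"
    using assms by blast
  obtain r where "r > 0" and Lip: "Lipschitz_continuous_map (submetric X (mball_of X x r)) Y h"
    using h x unfolding locally_Lipschitz_def by blast
  have "Lipschitz_continuous_map (submetric X (mball_of X x (min \<delta> r))) Y h"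
    by (rule Lipschitz_continuous_map_from_submetric_mono[OF Lip]) auto
  then have "Lipschitz_continuous_map (submetric X (mball_of X x (min \<delta> r))) Y g"
    by (rule Lipschitz_continuous_map_eq) (use eq in auto)
  then show "\<exists>\<delta>>0. Lipschitz_continuous_map (submetric X (mball_of X x \<delta>)) Y g"
    using \<open>\<delta> > 0\<close> \<open>r > 0\<close> by (intro exI[of _ "min \<delta> r"]) simp
qed

lemma non_Lipschitz_bounded_map_steep_pair:
  assumes not_Lipschitz: "\<not> Lipschitz_continuous_map (submetric X S) Y f"
    and "S \<subseteq> mspace X" and "f \<in> S \<rightarrow> mspace Y"
    and bounded: "\<And>a b. a \<in> S \<Longrightarrow> b \<in> S \<Longrightarrow> mdist Y (f a) (f b) \<le> B"
    and "c > 0"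
  shows "\<exists>a\<in>S. \<exists>b\<in>S. c * mdist X a b < mdist Y (f a) (f b) \<and> mdist X a b < 1 / c"
proof -
  define K where "K = c * (\<bar>B\<bar> + 1)"
  have "mspace (submetric X S) = S"
    using \<open>S \<subseteq> mspace X\<close> by auto
  then have "\<exists>a\<in>S. \<exists>b\<in>S. K * mdist X a b < mdist Y (f a) (f b)"
    using not_Lipschitz \<open>f \<in> S \<rightarrow> mspace Y\<close> unfolding Lipschitz_continuous_map_def
    by (auto simp: not_le)
  then obtain a b where ab: "a \<in> S" "b \<in> S" and steep: "K * mdist X a b < mdist Y (f a) (f b)"
    by blast
  have "c * mdist X a b \<le> K * mdist X a b"
    unfolding K_def using \<open>c > 0\<close> by (intro mult_right_mono) auto
  with steep have "c * mdist X a b < mdist Y (f a) (f b)"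
    by linarith
  moreover have "c * mdist X a b * (\<bar>B\<bar> + 1) < \<bar>B\<bar> + 1"
    using steep bounded[OF ab] unfolding K_def by (simp add: algebra_simps)
  then have "c * mdist X a b < 1"
    using mult_right_less_imp_less[of "c * mdist X a b" "\<bar>B\<bar> + 1" 1] by simp
  with \<open>c > 0\<close> have "mdist X a b < 1 / c"
    by (simp add: field_simps)
  ultimately show ?thesis
    using ab by blast
qed

lemma locally_Lipschitz_steep_pairs_bounded:
  assumes f: "locally_Lipschitz X Y f" and p: "p \<in> mspace X"
  obtains r C where "r > 0"
    "\<And>a b c. a \<in> mspace X \<Longrightarrow> b \<in> mspace X \<Longrightarrow> mdist X a p < r \<Longrightarrow>
       c * mdist X a b < mdist Y (f a) (f b) \<Longrightarrow> mdist X a b < 1 / c \<Longrightarrow> c < C"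
proof -
  obtain r L where "r > 0" "L > 0" and Lip:
    "\<And>a b. a \<in> mspace X \<Longrightarrow> b \<in> mspace X \<Longrightarrow> mdist X p a < r \<Longrightarrow> mdist X p b < r \<Longrightarrow>
       mdist Y (f a) (f b) \<le> L * mdist X a b"
    using locally_LipschitzE[OF f p] by metis
  show thesis
  proof (rule that[of "r / 2" "max L (2 / r)"])
    show "r / 2 > 0"
      using \<open>r > 0\<close> by simp
    fix a b c
    assume a: "a \<in> mspace X" and b: "b \<in> mspace X" and near: "mdist X a p < r / 2"
      and steep: "c * mdist X a b < mdist Y (f a) (f b)" and close: "mdist X a b < 1 / c"
    show "c < max L (2 / r)"
    proof (rule ccontr)
      assume "\<not> c < max L (2 / r)"
      then have "L \<le> c" and "2 / r \<le> c"
        by auto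
      moreover have "2 / r > 0"
        using \<open>r > 0\<close> by simp
      ultimately have "c > 0"
        by linarith
      with \<open>2 / r \<le> c\<close> \<open>r > 0\<close> have "1 / c \<le> r / 2"
        by (simp add: field_simps)
      then have "mdist X p b < r"
        using near close mdist_triangle[OF p a b] mdist_commute[of X a p] by linarith
      moreover have "mdist X p a < r"
        using near mdist_commute[of X a p] \<open>r > 0\<close> by linarith
      ultimately have "mdist Y (f a) (f b) \<le> L * mdist X a b"
        using Lip[OF a b] by blast
      also have "\<dots> \<le> c * mdist X a b"
        using \<open>L \<le> c\<close> by (intro mult_right_mono) auto
      finally show False
        using steep by linarith
    qed
  qed
qed

section \<open>Consequences of cofinal Bourbaki quasi-completeness\<close>

lemma not_cofinally_Bourbaki_quasi_complete_if_unbounded_rows: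
  assumes f: "locally_Lipschitz X Y f" and y0: "y0 \<in> mspace Y"
    and t_comp: "\<And>n k. t n k \<in> chain_comp X (x n) (1 / real (Suc n))"
    and t_far: "\<And>n k. real n + real k < mdist Y y0 (f (t n k))"
  shows "\<not> cofinally_Bourbaki_quasi_complete X"
proof (rule not_cofinally_Bourbaki_quasi_completeI[of t])
  show t_mspace: "t n k \<in> mspace X" for n k
    by (rule chain_comp_mspace[OF t_comp])
  show "eps_chain X (1 / real (Suc n)) (t n j) (t n k)" for n j k
    by (rule chain_comp_eps_chain[OF t_comp t_comp])
  fix p
  assume p: "p \<in> mspace X"
  then obtain \<delta> where "\<delta> > 0"
    and near: "\<And>a. a \<in> mspace X \<Longrightarrow> mdist X p a < \<delta> \<Longrightarrow> mdist Y (f p) (f a) < 1"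
    using locally_Lipschitz_continuous_at[OF f] by (metis zero_less_one)
  have "real n + real k < mdist Y y0 (f p) + 1" if "mdist X (t n k) p < \<delta>" for n k
  proof -
    have "mdist Y y0 (f (t n k)) \<le> mdist Y y0 (f p) + mdist Y (f p) (f (t n k))"
      using y0 p t_mspace by (intro mdist_triangle locally_Lipschitz_mspace[OF f])
    moreover have "mdist Y (f p) (f (t n k)) < 1"
      using near[OF t_mspace] that by (simp add: mdist_commute)
    ultimately show ?thesis
      using t_far[of n k] by linarith
  qed
  then have "{(n, k). mdist X (t n k) p < \<delta>} \<subseteq> {(n, k). real n + real k < mdist Y y0 (f p) + 1}"
    by auto
  then show "\<exists>e>0. finite {(n, k). mdist X (t n k) p < e}"
    using \<open>\<delta> > 0\<close> finite_nat_pairs_sum_less finite_subset by blast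
qed

lemma cofinally_Bourbaki_quasi_complete_imp_bounded_on_chain_comps:
  assumes complete: "cofinally_Bourbaki_quasi_complete X" and f: "locally_Lipschitz X Y f"
  obtains \<delta> where "\<delta> > 0"
    "\<And>x. x \<in> mspace X \<Longrightarrow> \<exists>B. \<forall>a\<in>chain_comp X x \<delta>. mdist Y (f x) (f a) \<le> B"
proof -
  have "\<exists>n. \<forall>x\<in>mspace X. \<exists>B. \<forall>a\<in>chain_comp X x (1 / real (Suc n)). mdist Y (f x) (f a) \<le> B"
  proof (rule ccontr)
    assume "\<not> ?thesis"
    then obtain x where x_mspace: "\<And>n. x n \<in> mspace X"
      and unbounded: "\<And>n B. \<exists>a\<in>chain_comp X (x n) (1 / real (Suc n)). B < mdist Y (f (x n)) (f a)"
      by (metis not_le)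
    define y0 where "y0 = f (x 0)"
    have y0: "y0 \<in> mspace Y"
      unfolding y0_def by (rule locally_Lipschitz_mspace[OF f x_mspace])
    have "\<exists>a\<in>chain_comp X (x n) (1 / real (Suc n)). real n + real k < mdist Y y0 (f a)" for n k
    proof -
      obtain a where a: "a \<in> chain_comp X (x n) (1 / real (Suc n))"
        "real n + real k + mdist Y y0 (f (x n)) < mdist Y (f (x n)) (f a)"
        using unbounded by blast
      have "a \<in> mspace X"
        using a(1) by (rule chain_comp_mspace)
      then have "f a \<in> mspace Y"
        by (rule locally_Lipschitz_mspace[OF f])
      then have "mdist Y (f (x n)) (f a) \<le> mdist Y (f (x n)) y0 + mdist Y y0 (f a)"
        using y0 locally_Lipschitz_mspace[OF f x_mspace] by (intro mdist_triangle)
      then have "real n + real k < mdist Y y0 (f a)"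
        using a(2) mdist_commute[of Y "f (x n)" y0] by linarith
      with a(1) show ?thesis
        by blast
    qed
    then obtain t where "\<And>n k. t n k \<in> chain_comp X (x n) (1 / real (Suc n))"
      and "\<And>n k. real n + real k < mdist Y y0 (f (t n k))"
      by metis
    with complete show False
      using not_cofinally_Bourbaki_quasi_complete_if_unbounded_rows[OF f y0] by blast
  qed
  then show thesis
    using that by (metis of_nat_0_less_iff zero_less_Suc zero_less_divide_1_iff)
qed

lemma cofinally_Bourbaki_quasi_complete_imp_strongly_uniformly_locally_bounded:
  assumes "cofinally_Bourbaki_quasi_complete X"
  shows "strongly_uniformly_locally_bounded X"
proof -
  obtain \<delta> where "\<delta> > 0"
    and bounded: "\<And>x. x \<in> mspace X \<Longrightarrow> \<exists>B. \<forall>a\<in>chain_comp X x \<delta>. mdist X x a \<le> B"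
    using cofinally_Bourbaki_quasi_complete_imp_bounded_on_chain_comps[OF assms locally_Lipschitz_id]
    by metis
  have "Metric_space.mbounded (mspace X) (mdist X) (chain_comp X x \<delta>)" if x: "x \<in> mspace X" for x
  proof -
    obtain B where "\<forall>a\<in>chain_comp X x \<delta>. mdist X x a \<le> B"
      using bounded[OF x] by blast
    then have "chain_comp X x \<delta> \<subseteq> mcball_of X x B"
      using x chain_comp_mspace by fastforce
    then show ?thesis
      unfolding Metric_space.mbounded_def[OF Metric_space_mspace_mdist] mcball_of_def by blast
  qed
  with \<open>\<delta> > 0\<close> show ?thesis
    unfolding strongly_uniformly_locally_bounded_def by blast
qed

lemma steep_pairs_in_fine_chain_comps:
  assumes f: "locally_Lipschitz X Y f" and "\<delta>0 > 0"
    and bounded: "\<And>x. x \<in> mspace X \<Longrightarrow> \<exists>B. \<forall>a\<in>chain_comp X x \<delta>0. mdist Y (f x) (f a) \<le> B"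
    and not_Lipschitz: "\<not> strongly_uniformly_locally_Lipschitz X Y f"
  obtains x a b where
    "\<And>n k. a n k \<in> chain_comp X (x n) (1 / real (Suc n))"
    "\<And>n k. b n k \<in> chain_comp X (x n) (1 / real (Suc n))"
    "\<And>n k. real (Suc (n + k)) * mdist X (a n k) (b n k) < mdist Y (f (a n k)) (f (b n k))"
    "\<And>n k. mdist X (a n k) (b n k) < 1 / real (Suc (n + k))"
proof -
  have f_mspace: "f \<in> mspace X \<rightarrow> mspace Y"
    using f unfolding locally_Lipschitz_def by blast
  define C where "C x n = chain_comp X x (min \<delta>0 (1 / real (Suc n)))" for x n
  have "\<forall>n. \<exists>x\<in>mspace X. \<not> Lipschitz_continuous_map (submetric X (C x n)) Y f"
    using not_Lipschitz f_mspace \<open>\<delta>0 > 0\<close>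
    unfolding strongly_uniformly_locally_Lipschitz_def C_def by auto
  then obtain x where x_mspace: "\<And>n. x n \<in> mspace X"
    and C_not_Lipschitz: "\<And>n. \<not> Lipschitz_continuous_map (submetric X (C (x n) n)) Y f"
    by metis
  have C_mspace: "C (x n) n \<subseteq> mspace X" for n
    unfolding C_def by (blast dest: chain_comp_mspace)
  have C_fine: "C (x n) n \<subseteq> chain_comp X (x n) (1 / real (Suc n))" for n
    unfolding C_def by (rule chain_comp_mono) simp
  have "\<exists>a b. a \<in> chain_comp X (x n) (1 / real (Suc n)) \<and> b \<in> chain_comp X (x n) (1 / real (Suc n)) \<and>
      real (Suc (n + k)) * mdist X a b < mdist Y (f a) (f b) \<and>
      mdist X a b < 1 / real (Suc (n + k))" for n k
  proof -
    obtain B where B: "\<forall>a\<in>chain_comp X (x n) \<delta>0. mdist Y (f (x n)) (f a) \<le> B"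
      using bounded[OF x_mspace] by blast
    have C_bounded: "mdist Y (f a) (f b) \<le> 2 * B" if "a \<in> C (x n) n" "b \<in> C (x n) n" for a b
    proof -
      have "a \<in> chain_comp X (x n) \<delta>0" "b \<in> chain_comp X (x n) \<delta>0"
        using that chain_comp_mono[where X = X and x = "x n" and e = "min \<delta>0 (1 / real (Suc n))"
            and e' = \<delta>0]
        unfolding C_def by auto
      then have "mdist Y (f (x n)) (f a) \<le> B" "mdist Y (f (x n)) (f b) \<le> B"
        using B by blast+
      moreover have "f a \<in> mspace Y" "f b \<in> mspace Y" "f (x n) \<in> mspace Y"
        using that C_mspace x_mspace f_mspace by blast+
      ultimately show ?thesis
        using mdist_triangle[of "f a" Y "f (x n)" "f b"] mdist_commute[of Y "f a" "f (x n)"]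
        by linarith
    qed
    have f_C: "f \<in> C (x n) n \<rightarrow> mspace Y"
      using f_mspace C_mspace by blast
    have "real (Suc (n + k)) > 0"
      by simp
    then obtain a b where "a \<in> C (x n) n" "b \<in> C (x n) n"
      "real (Suc (n + k)) * mdist X a b < mdist Y (f a) (f b)"
      "mdist X a b < 1 / real (Suc (n + k))"
      using non_Lipschitz_bounded_map_steep_pair[OF C_not_Lipschitz C_mspace f_C C_bounded] by blast
    then show ?thesis
      using C_fine[of n] by blast
  qed
  then obtain a b where a: "\<And>n k. a n k \<in> chain_comp X (x n) (1 / real (Suc n))"
    and b: "\<And>n k. b n k \<in> chain_comp X (x n) (1 / real (Suc n))"
    and steep: "\<And>n k. real (Suc (n + k)) * mdist X (a n k) (b n k) < mdist Y (f (a n k)) (f (b n k))"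
    and close: "\<And>n k. mdist X (a n k) (b n k) < 1 / real (Suc (n + k))"
    by metis
  show thesis
    by (rule that[OF a b steep close])
qed

text \<open>The steep pairs are interleaved into the rows of a double sequence; close to any point, the
  pairs have bounded steepness, which bounds their indices.\<close>

lemma cofinally_Bourbaki_quasi_complete_imp_strongly_uniformly_locally_Lipschitz:
  assumes complete: "cofinally_Bourbaki_quasi_complete X" and f: "locally_Lipschitz X Y f"
  shows "strongly_uniformly_locally_Lipschitz X Y f"
proof (rule ccontr)
  obtain \<delta>0 where "\<delta>0 > 0"
    and bounded: "\<And>x. x \<in> mspace X \<Longrightarrow> \<exists>B. \<forall>a\<in>chain_comp X x \<delta>0. mdist Y (f x) (f a) \<le> B"
    using cofinally_Bourbaki_quasi_complete_imp_bounded_on_chain_comps[OF complete f] by metis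
  assume "\<not> strongly_uniformly_locally_Lipschitz X Y f"
  then obtain x a b where a_comp: "\<And>n k. a n k \<in> chain_comp X (x n) (1 / real (Suc n))"
    and b_comp: "\<And>n k. b n k \<in> chain_comp X (x n) (1 / real (Suc n))"
    and steep: "\<And>n k. real (Suc (n + k)) * mdist X (a n k) (b n k) < mdist Y (f (a n k)) (f (b n k))"
    and close: "\<And>n k. mdist X (a n k) (b n k) < 1 / real (Suc (n + k))"
    using steep_pairs_in_fine_chain_comps[OF f \<open>\<delta>0 > 0\<close> bounded] by metis
  define t where "t n k = (if even k then a n (k div 2) else b n (k div 2))" for n k
  have t_comp: "t n k \<in> chain_comp X (x n) (1 / real (Suc n))" for n k
    unfolding t_def using a_comp b_comp by simp
  have "\<not> cofinally_Bourbaki_quasi_complete X"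
  proof (rule not_cofinally_Bourbaki_quasi_completeI[of t])
    show "t n k \<in> mspace X" for n k
      by (rule chain_comp_mspace[OF t_comp])
    show "eps_chain X (1 / real (Suc n)) (t n j) (t n k)" for n j k
      by (rule chain_comp_eps_chain[OF t_comp t_comp])
    fix p
    assume p: "p \<in> mspace X"
    obtain r D where "r > 0" and no_steep:
      "\<And>a b c. a \<in> mspace X \<Longrightarrow> b \<in> mspace X \<Longrightarrow> mdist X a p < r \<Longrightarrow>
         c * mdist X a b < mdist Y (f a) (f b) \<Longrightarrow> mdist X a b < 1 / c \<Longrightarrow> c < D"
      using locally_Lipschitz_steep_pairs_bounded[OF f p] by metis
    have "real n + real k < 2 * D" if "mdist X (t n k) p < r" for n k
    proof -
      let ?j = "k div 2"
      have a_mspace: "a n ?j \<in> mspace X" and b_mspace: "b n ?j \<in> mspace X"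
        by (rule chain_comp_mspace[OF a_comp], rule chain_comp_mspace[OF b_comp])
      have "real (Suc (n + ?j)) < D"
      proof (cases "even k")
        case True
        then have "mdist X (a n ?j) p < r"
          using that by (simp add: t_def)
        then show ?thesis
          by (rule no_steep[OF a_mspace b_mspace _ steep close])
      next
        case False
        then have "mdist X (b n ?j) p < r"
          using that by (simp add: t_def)
        moreover have "mdist X (b n ?j) (a n ?j) = mdist X (a n ?j) (b n ?j)"
          and "mdist Y (f (b n ?j)) (f (a n ?j)) = mdist Y (f (a n ?j)) (f (b n ?j))"
          by (rule mdist_commute)+
        ultimately show ?thesis
          using no_steep[OF b_mspace a_mspace] steep[of n ?j] close[of n ?j] by simp
      qed
      then show ?thesis
        by linarith
    qed
    then have "{(n, k). mdist X (t n k) p < r} \<subseteq> {(n, k). real n + real k < 2 * D}"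
      by auto
    then show "\<exists>e>0. finite {(n, k). mdist X (t n k) p < e}"
      using \<open>r > 0\<close> finite_nat_pairs_sum_less finite_subset by blast
  qed
  with complete show False
    by contradiction
qed

section \<open>Uniform density of locally Lipschitz functions\<close>

definition infdist_of :: "'a metric \<Rightarrow> 'a \<Rightarrow> 'a set \<Rightarrow> real" where
  "infdist_of X x A = Inf ((\<lambda>y. mdist X x y) ` A)"

lemma infdist_of_nonneg: "A \<noteq> {} \<Longrightarrow> 0 \<le> infdist_of X x A"
  unfolding infdist_of_def by (rule cInf_greatest) auto

lemma infdist_of_le: "y \<in> A \<Longrightarrow> infdist_of X x A \<le> mdist X x y"
  unfolding infdist_of_def by (rule cInf_lower) (auto intro: bdd_belowI[of _ 0])

lemma infdist_of_eq_0: "x \<in> A \<Longrightarrow> x \<in> mspace X \<Longrightarrow> infdist_of X x A = 0"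
  using infdist_of_le[of x A X x] infdist_of_nonneg[of A X x] by fastforce

lemma infdist_of_pos:
  assumes A: "closedin (mtopology_of X) A" "A \<noteq> {}" and x: "x \<in> mspace X" "x \<notin> A"
  shows "0 < infdist_of X x A"
proof -
  have "closedin (Metric_space.mtopology (mspace X) (mdist X)) A"
    using A(1) by (simp add: mtopology_of_def)
  then have "\<forall>x. x \<in> mspace X - A \<longrightarrow> (\<exists>r>0. disjnt A (mball_of X x r))"
    unfolding Metric_space.closedin_metric[OF Metric_space_mspace_mdist] mball_of_def by simp
  then obtain r where "r > 0" and "disjnt A (mball_of X x r)"
    using x by blast
  moreover have "A \<subseteq> mspace X"
    using closedin_subset[OF A(1)] by simp
  ultimately have "r \<le> infdist_of X x A"
    unfolding infdist_of_def using A(2) x(1) by (intro cInf_greatest) (auto simp: disjnt_iff not_less)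
  with \<open>r > 0\<close> show ?thesis
    by simp
qed

lemma infdist_of_Lipschitz:
  assumes "A \<noteq> {}" "A \<subseteq> mspace X" and x: "x \<in> mspace X" and y: "y \<in> mspace X"
  shows "\<bar>infdist_of X x A - infdist_of X y A\<bar> \<le> mdist X x y"
proof -
  have "infdist_of X u A \<le> infdist_of X v A + mdist X u v"
    if "u \<in> mspace X" "v \<in> mspace X" for u v
  proof -
    have "infdist_of X u A - mdist X u v \<le> infdist_of X v A"
      unfolding infdist_of_def[of X v]
    proof (rule cInf_greatest)
      show "(\<lambda>z. mdist X v z) ` A \<noteq> {}"
        using \<open>A \<noteq> {}\<close> by simp
      fix w
      assume "w \<in> (\<lambda>z. mdist X v z) ` A"
      then obtain z where "z \<in> A" "w = mdist X v z"
        by blast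
      have "mdist X u z \<le> mdist X u v + mdist X v z"
        using that \<open>z \<in> A\<close> \<open>A \<subseteq> mspace X\<close> by (intro mdist_triangle) auto
      then show "infdist_of X u A - mdist X u v \<le> w"
        using infdist_of_le[OF \<open>z \<in> A\<close>, of X u] \<open>w = mdist X v z\<close> by linarith
    qed
    then show ?thesis
      by simp
  qed
  from this[OF x y] this[OF y x] show ?thesis
    using mdist_commute[of X x y] by linarith
qed


lemma abs_ratio_diff_le:
  fixes a b a' b' :: real
  assumes "0 \<le> a" "0 \<le> b" "0 < a + b" "0 < a' + b'"
  shows "\<bar>a / (a + b) - a' / (a' + b')\<bar> \<le> (\<bar>a - a'\<bar> + \<bar>b - b'\<bar>) / (a' + b')"
proof -
  have "\<bar>a * (b' - b) + b * (a - a')\<bar> \<le> a * \<bar>b - b'\<bar> + b * \<bar>a - a'\<bar>"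
    using abs_triangle_ineq[of "a * (b' - b)" "b * (a - a')"] assms(1,2)
    by (simp add: abs_mult abs_minus_commute)
  also have "\<dots> \<le> a * (\<bar>a - a'\<bar> + \<bar>b - b'\<bar>) + b * (\<bar>a - a'\<bar> + \<bar>b - b'\<bar>)"
    using assms(1,2) by (intro add_mono mult_left_mono) auto
  finally have numerator: "\<bar>a * (b' - b) + b * (a - a')\<bar> \<le> (a + b) * (\<bar>a - a'\<bar> + \<bar>b - b'\<bar>)"
    by (simp add: distrib_right)
  have "a / (a + b) - a' / (a' + b') = (a * (b' - b) + b * (a - a')) / ((a + b) * (a' + b'))"
    using assms(3,4) by (simp add: field_simps)
  then have "\<bar>a / (a + b) - a' / (a' + b')\<bar> = \<bar>a * (b' - b) + b * (a - a')\<bar> / ((a + b) * (a' + b'))"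
    using assms(3,4) by (simp add: abs_divide)
  also have "\<dots> \<le> (a + b) * (\<bar>a - a'\<bar> + \<bar>b - b'\<bar>) / ((a + b) * (a' + b'))"
    using numerator assms(3,4) by (intro divide_right_mono) auto
  also have "\<dots> = (\<bar>a - a'\<bar> + \<bar>b - b'\<bar>) / (a' + b')"
    using assms(3) by simp
  finally show ?thesis .
qed

text \<open>The case distinction avoids the junk value \<open>Inf {}\<close> of the distance to an empty set.\<close>

definition separating_fun :: "'a metric \<Rightarrow> 'a set \<Rightarrow> 'a set \<Rightarrow> 'a \<Rightarrow> real" where
  "separating_fun X F G x =
    (if F = {} then 1 else if G = {} then 0
     else infdist_of X x F / (infdist_of X x F + infdist_of X x G))"

context
  fixes X :: "'a metric" and F G :: "'a set"
  assumes F: "closedin (mtopology_of X) F" and G: "closedin (mtopology_of X) G"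
    and disjoint: "F \<inter> G = {}"
begin

lemma infdist_of_sum_pos:
  assumes "F \<noteq> {}" "G \<noteq> {}" "x \<in> mspace X"
  shows "0 < infdist_of X x F + infdist_of X x G"
proof (cases "x \<in> F")
  case True
  then have "x \<notin> G"
    using disjoint by blast
  then show ?thesis
    using infdist_of_pos[OF G assms(2,3)] infdist_of_nonneg[OF assms(1)] by (smt (verit))
next
  case False
  then show ?thesis
    using infdist_of_pos[OF F assms(1,3)] infdist_of_nonneg[OF assms(2)] by (smt (verit))
qed

lemma separating_fun_bounds:
  assumes "x \<in> mspace X"
  shows "0 \<le> separating_fun X F G x \<and> separating_fun X F G x \<le> 1"
proof (cases "F = {} \<or> G = {}")
  case False
  then have "0 < infdist_of X x F + infdist_of X x G"
    using infdist_of_sum_pos assms by blast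
  moreover have "0 \<le> infdist_of X x F" "0 \<le> infdist_of X x G"
    using False infdist_of_nonneg[of F X x] infdist_of_nonneg[of G X x] by auto
  ultimately show ?thesis
    using False unfolding separating_fun_def by (simp add: divide_le_eq_1)
qed (auto simp: separating_fun_def)

lemma separating_fun_eq_0: "x \<in> F \<Longrightarrow> separating_fun X F G x = 0"
  using closedin_subset[OF F] by (auto simp: separating_fun_def infdist_of_eq_0)

lemma separating_fun_eq_1:
  assumes "x \<in> G"
  shows "separating_fun X F G x = 1"
proof (cases "F = {}")
  case False
  have "x \<in> mspace X" "x \<notin> F"
    using assms closedin_subset[OF G] disjoint by auto
  then have "0 < infdist_of X x F"
    by (rule infdist_of_pos[OF F False])
  moreover have "infdist_of X x G = 0"
    using assms \<open>x \<in> mspace X\<close> by (rule infdist_of_eq_0)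
  ultimately show ?thesis
    using False assms unfolding separating_fun_def by auto
qed (simp add: separating_fun_def)

lemma Lipschitz_continuous_map_separating_fun_mball:
  assumes nonempty: "F \<noteq> {}" "G \<noteq> {}" and x: "x \<in> mspace X"
  defines "c \<equiv> infdist_of X x F + infdist_of X x G"
  shows "Lipschitz_continuous_map (submetric X (mball_of X x (c / 4))) euclidean_metric
    (separating_fun X F G)"
proof -
  have F_mspace: "F \<subseteq> mspace X" and G_mspace: "G \<subseteq> mspace X"
    using closedin_subset[OF F] closedin_subset[OF G] by auto
  have "c > 0"
    unfolding c_def using infdist_of_sum_pos[OF nonempty x] .
  have denominator: "c / 2 \<le> infdist_of X y F + infdist_of X y G"
    if "y \<in> mball_of X x (c / 4)" for y
  proof -
    have y: "y \<in> mspace X" "mdist X x y < c / 4"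
      using that by auto
    show ?thesis
      using infdist_of_Lipschitz[OF nonempty(1) F_mspace x y(1)]
        infdist_of_Lipschitz[OF nonempty(2) G_mspace x y(1)] y(2) c_def
      unfolding abs_le_iff by (elim conjE) linarith
  qed
  have "\<bar>separating_fun X F G y - separating_fun X F G z\<bar> \<le> 4 / c * mdist X y z"
    if y: "y \<in> mball_of X x (c / 4)" and z: "z \<in> mball_of X x (c / 4)" for y z
  proof -
    have y_mspace: "y \<in> mspace X" and z_mspace: "z \<in> mspace X"
      using y z by auto
    have "separating_fun X F G u = infdist_of X u F / (infdist_of X u F + infdist_of X u G)" for u
      using nonempty by (simp add: separating_fun_def)
    then have "\<bar>separating_fun X F G y - separating_fun X F G z\<bar> \<le>
        (\<bar>infdist_of X y F - infdist_of X z F\<bar> + \<bar>infdist_of X y G - infdist_of X z G\<bar>) /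
        (infdist_of X z F + infdist_of X z G)"
      using abs_ratio_diff_le[OF infdist_of_nonneg[OF nonempty(1)] infdist_of_nonneg[OF nonempty(2)]
          infdist_of_sum_pos[OF nonempty y_mspace] infdist_of_sum_pos[OF nonempty z_mspace]]
      by simp
    also have "\<dots> \<le> (2 * mdist X y z) / (c / 2)"
    proof (rule frac_le)
      show "\<bar>infdist_of X y F - infdist_of X z F\<bar> + \<bar>infdist_of X y G - infdist_of X z G\<bar>
          \<le> 2 * mdist X y z"
        using infdist_of_Lipschitz[OF nonempty(1) F_mspace y_mspace z_mspace]
          infdist_of_Lipschitz[OF nonempty(2) G_mspace y_mspace z_mspace] by linarith
      show "c / 2 \<le> infdist_of X z F + infdist_of X z G"
        by (rule denominator[OF z])
    qed (use \<open>c > 0\<close> in auto)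
    also have "\<dots> = 4 / c * mdist X y z"
      by (simp add: field_simps)
    finally show ?thesis .
  qed
  then show ?thesis
    unfolding Lipschitz_continuous_map_def
    by (intro conjI exI[of _ "4 / c"]) (auto simp: dist_real_def)
qed

lemma locally_Lipschitz_separating_fun:
  "locally_Lipschitz X euclidean_metric (separating_fun X F G)"
proof (cases "F = {} \<or> G = {}")
  case True
  then have "separating_fun X F G = (\<lambda>x. if F = {} then 1 else 0)"
    unfolding separating_fun_def by auto
  then show ?thesis
    by (simp add: locally_Lipschitz_const)
next
  case False
  then have nonempty: "F \<noteq> {}" "G \<noteq> {}"
    by auto
  show ?thesis
    unfolding locally_Lipschitz_def
  proof (intro conjI ballI)
    fix x
    assume x: "x \<in> mspace X"
    then have "infdist_of X x F + infdist_of X x G > 0"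
      by (rule infdist_of_sum_pos[OF nonempty])
    then show "\<exists>\<delta>>0. Lipschitz_continuous_map (submetric X (mball_of X x \<delta>)) euclidean_metric
        (separating_fun X F G)"
      using Lipschitz_continuous_map_separating_fun_mball[OF nonempty x]
      by (intro exI[of _ "(infdist_of X x F + infdist_of X x G) / 4"]) simp
  qed simp
qed

end

definition level_step :: "'a metric \<Rightarrow> ('a \<Rightarrow> real) \<Rightarrow> int \<Rightarrow> 'a \<Rightarrow> real" where
  "level_step X f k =
    separating_fun X {x \<in> mspace X. f x \<le> of_int k} {x \<in> mspace X. of_int k + 1 \<le> f x}"

context
  fixes X :: "'a metric" and f :: "'a \<Rightarrow> real"
  assumes f: "continuous_map (mtopology_of X) euclideanreal f"
begin

lemma closedin_level_sets:
  "closedin (mtopology_of X) {x \<in> mspace X. f x \<le> of_int k}"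
  "closedin (mtopology_of X) {x \<in> mspace X. of_int k + 1 \<le> f x}"
  using closedin_continuous_map_preimage[OF f, of "{..of_int k}"]
    closedin_continuous_map_preimage[OF f, of "{of_int k + 1..}"]
  by (simp_all flip: closed_closedin)

lemma level_sets_disjoint:
  "{x \<in> mspace X. f x \<le> of_int k} \<inter> {x \<in> mspace X. of_int k + 1 \<le> f x} = {}"
  by auto

lemma level_step_eq_0:
  assumes "x \<in> mspace X" "\<lfloor>f x\<rfloor> < k"
  shows "level_step X f k x = 0"
proof -
  have "f x \<le> of_int k"
    using assms(2) by linarith
  then show ?thesis
    unfolding level_step_def using assms(1)
    by (intro separating_fun_eq_0 closedin_level_sets level_sets_disjoint) simp
qed

lemma level_step_eq_1:
  assumes "x \<in> mspace X" "k < \<lfloor>f x\<rfloor>"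
  shows "level_step X f k x = 1"
proof -
  have "of_int k + 1 \<le> f x"
    using assms(2) by linarith
  then show ?thesis
    unfolding level_step_def using assms(1)
    by (intro separating_fun_eq_1 closedin_level_sets level_sets_disjoint) simp
qed

lemma level_step_bounds: "x \<in> mspace X \<Longrightarrow> 0 \<le> level_step X f k x \<and> level_step X f k x \<le> 1"
  unfolding level_step_def by (rule separating_fun_bounds[OF closedin_level_sets level_sets_disjoint])

lemma locally_Lipschitz_level_step: "locally_Lipschitz X euclidean_metric (level_step X f k)"
  unfolding level_step_def
  by (rule locally_Lipschitz_separating_fun[OF closedin_level_sets level_sets_disjoint])

end

lemma continuous_map_real_mtopology_ofE:
  fixes f :: "'a \<Rightarrow> real"
  assumes "continuous_map (mtopology_of X) euclideanreal f" and "x \<in> mspace X" and "\<epsilon> > 0"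
  obtains \<delta> where "\<delta> > 0" "\<And>y. y \<in> mspace X \<Longrightarrow> mdist X x y < \<delta> \<Longrightarrow> \<bar>f x - f y\<bar> < \<epsilon>"
proof -
  have "continuous_map (mtopology_of X) (mtopology_of euclidean_metric) f"
    using assms(1) by simp
  then have "\<exists>\<delta>>0. \<forall>y. y \<in> mspace X \<and> mdist X x y < \<delta> \<longrightarrow> dist (f x) (f y) < \<epsilon>"
    using assms(2,3) unfolding mtopology_of_def
      Metric_space.metric_continuous_map[OF Metric_space_mspace_mdist Metric_space_mspace_mdist]
    by simp
  then show thesis
    using that by (auto simp: dist_real_def)
qed

text \<open>Near any point \<open>\<lfloor>f\<rfloor>\<close> takes at most three values, so there the approximation is a sum
  of three level steps.\<close>

lemma locally_Lipschitz_approximation_within_1: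
  fixes f :: "'a \<Rightarrow> real"
  assumes f: "continuous_map (mtopology_of X) euclideanreal f"
  obtains g where "locally_Lipschitz X euclidean_metric g" "\<And>x. x \<in> mspace X \<Longrightarrow> \<bar>f x - g x\<bar> \<le> 1"
proof -
  define g where "g x = of_int \<lfloor>f x\<rfloor> + level_step X f \<lfloor>f x\<rfloor> x" for x
  have approx: "\<bar>f x - g x\<bar> \<le> 1" if "x \<in> mspace X" for x
    using level_step_bounds[OF f that, of "\<lfloor>f x\<rfloor>"] unfolding g_def by linarith
  have g_near: "g y = of_int (m - 1) + level_step X f (m - 1) y + level_step X f m y +
      level_step X f (m + 1) y"
    if "y \<in> mspace X" "m - 1 \<le> \<lfloor>f y\<rfloor>" "\<lfloor>f y\<rfloor> \<le> m + 1" for m y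
  proof -
    have "\<lfloor>f y\<rfloor> = m - 1 \<or> \<lfloor>f y\<rfloor> = m \<or> \<lfloor>f y\<rfloor> = m + 1"
      using that(2,3) by arith
    then show ?thesis
      by (elim disjE) (simp_all add: g_def level_step_eq_0[OF f that(1)] level_step_eq_1[OF f that(1)])
  qed
  have "locally_Lipschitz X euclidean_metric g"
  proof (rule locally_Lipschitz_locally_eq)
    fix x
    assume x: "x \<in> mspace X"
    obtain \<delta> where "\<delta> > 0" and near: "\<And>y. y \<in> mspace X \<Longrightarrow> mdist X x y < \<delta> \<Longrightarrow> \<bar>f x - f y\<bar> < 1"
      using continuous_map_real_mtopology_ofE[OF f x zero_less_one] by metis
    define m where "m = \<lfloor>f x\<rfloor>"
    define h where "h y = of_int (m - 1) + level_step X f (m - 1) y + level_step X f m y +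
      level_step X f (m + 1) y" for y
    have "g y = h y" if "y \<in> mball_of X x \<delta>" for y
    proof -
      have "y \<in> mspace X" "\<bar>f x - f y\<bar> < 1"
        using that near by auto
      then show ?thesis
        unfolding h_def m_def by (intro g_near) linarith+
    qed
    moreover have "locally_Lipschitz X euclidean_metric h"
      unfolding h_def
      by (intro locally_Lipschitz_add locally_Lipschitz_const locally_Lipschitz_level_step f) simp
    ultimately show "\<exists>h \<delta>. \<delta> > 0 \<and> locally_Lipschitz X euclidean_metric h \<and>
        (\<forall>y\<in>mball_of X x \<delta>. g y = h y)"
      using \<open>\<delta> > 0\<close> by blast
  qed
  with approx show thesis
    using that by blast
qed

lemma locally_Lipschitz_uniformly_dense:
  fixes f :: "'a \<Rightarrow> real"
  assumes f: "continuous_map (mtopology_of X) euclideanreal f" and "e > 0"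
  obtains g where "locally_Lipschitz X euclidean_metric g" "\<And>x. x \<in> mspace X \<Longrightarrow> \<bar>f x - g x\<bar> < e"
proof -
  define \<epsilon> where "\<epsilon> = e / 2"
  have "\<epsilon> > 0"
    unfolding \<epsilon>_def using \<open>e > 0\<close> by simp
  have "continuous_map (mtopology_of X) euclideanreal (\<lambda>x. f x / \<epsilon>)"
    using continuous_map_real_mult_left[OF f, of "1 / \<epsilon>"] by simp
  then obtain h where h: "locally_Lipschitz X euclidean_metric h"
    and close: "\<And>x. x \<in> mspace X \<Longrightarrow> \<bar>f x / \<epsilon> - h x\<bar> \<le> 1"
    using locally_Lipschitz_approximation_within_1 by metis
  show thesis
  proof (rule that)
    show "locally_Lipschitz X euclidean_metric (\<lambda>x. \<epsilon> * h x)"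
      by (rule locally_Lipschitz_cmult[OF h])
    fix x
    assume "x \<in> mspace X"
    have "f x - \<epsilon> * h x = \<epsilon> * (f x / \<epsilon> - h x)"
      using \<open>\<epsilon> > 0\<close> by (simp add: field_simps)
    then have "\<bar>f x - \<epsilon> * h x\<bar> = \<epsilon> * \<bar>f x / \<epsilon> - h x\<bar>"
      using \<open>\<epsilon> > 0\<close> by (simp add: abs_mult)
    also have "\<dots> \<le> \<epsilon>"
      using close[OF \<open>x \<in> mspace X\<close>] \<open>\<epsilon> > 0\<close> by simp
    finally show "\<bar>f x - \<epsilon> * h x\<bar> < e"
      unfolding \<epsilon>_def using \<open>e > 0\<close> by simp
  qed
qed

section \<open>A locally Lipschitz function far from all strongly uniformly locally Lipschitz ones\<close>

lemma strongly_uniformly_locally_Lipschitz_bounded_on_cofinal_set: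
  assumes bounded: "strongly_uniformly_locally_bounded X"
    and s: "range s \<subseteq> mspace X" "cofinally_Bourbaki_quasi_Cauchy X s"
    and g: "strongly_uniformly_locally_Lipschitz X Y g"
  obtains N B where "infinite N" "\<And>j k. j \<in> N \<Longrightarrow> k \<in> N \<Longrightarrow> mdist Y (g (s j)) (g (s k)) \<le> B"
proof -
  obtain \<delta>0 where "\<delta>0 > 0"
    and comp_bounded: "\<And>x. x \<in> mspace X \<Longrightarrow> Metric_space.mbounded (mspace X) (mdist X) (chain_comp X x \<delta>0)"
    using bounded unfolding strongly_uniformly_locally_bounded_def by blast
  obtain \<delta>1 where "\<delta>1 > 0"
    and comp_Lipschitz: "\<And>x. x \<in> mspace X \<Longrightarrow> Lipschitz_continuous_map (submetric X (chain_comp X x \<delta>1)) Y g"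
    using g unfolding strongly_uniformly_locally_Lipschitz_def by blast
  have "min \<delta>0 \<delta>1 > 0"
    using \<open>\<delta>0 > 0\<close> \<open>\<delta>1 > 0\<close> by simp
  then obtain N where "infinite N" and chained: "\<forall>j\<in>N. \<forall>k\<in>N. eps_chain X (min \<delta>0 \<delta>1) (s j) (s k)"
    using s(2) unfolding cofinally_Bourbaki_quasi_Cauchy_def by blast
  then obtain i where "i \<in> N"
    by (metis ex_in_conv infinite_imp_nonempty)
  have x: "s i \<in> mspace X"
    using s(1) by blast
  have in_comps: "s k \<in> chain_comp X (s i) \<delta>0" "s k \<in> chain_comp X (s i) \<delta>1" if "k \<in> N" for k
  proof -
    have "s k \<in> chain_comp X (s i) (min \<delta>0 \<delta>1)"
      using chained \<open>i \<in> N\<close> that s(1) unfolding chain_comp_def by blast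
    then show "s k \<in> chain_comp X (s i) \<delta>0" "s k \<in> chain_comp X (s i) \<delta>1"
      using chain_comp_mono[of "min \<delta>0 \<delta>1" \<delta>0 X "s i"] chain_comp_mono[of "min \<delta>0 \<delta>1" \<delta>1 X "s i"]
      by auto
  qed
  obtain D where D: "\<forall>a\<in>chain_comp X (s i) \<delta>0. \<forall>b\<in>chain_comp X (s i) \<delta>0. mdist X a b \<le> D"
    using comp_bounded[OF x] unfolding Metric_space.mbounded_alt[OF Metric_space_mspace_mdist] by blast
  obtain L where "L > 0" and L: "\<forall>a\<in>chain_comp X (s i) \<delta>1 \<inter> mspace X.
      \<forall>b\<in>chain_comp X (s i) \<delta>1 \<inter> mspace X. mdist Y (g a) (g b) \<le> L * mdist X a b"
    using comp_Lipschitz[OF x] unfolding Lipschitz_continuous_map_pos by auto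
  show thesis
  proof (rule that[OF \<open>infinite N\<close>])
    fix j k
    assume "j \<in> N" "k \<in> N"
    moreover have "s j \<in> mspace X" "s k \<in> mspace X"
      using s(1) by blast+
    ultimately have "mdist Y (g (s j)) (g (s k)) \<le> L * mdist X (s j) (s k)"
      using L in_comps(2) by blast
    also have "\<dots> \<le> L * D"
      using D in_comps(1) \<open>j \<in> N\<close> \<open>k \<in> N\<close> \<open>L > 0\<close> by (intro mult_left_mono) auto
    finally show "mdist Y (g (s j)) (g (s k)) \<le> L * D" .
  qed
qed

definition spike :: "'a metric \<Rightarrow> (nat \<Rightarrow> 'a) \<Rightarrow> nat \<Rightarrow> 'a \<Rightarrow> real" where
  "spike X s n x = real n - real n * real n * mdist X x (s n)"

definition spike_sup :: "'a metric \<Rightarrow> (nat \<Rightarrow> 'a) \<Rightarrow> 'a \<Rightarrow> real" where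
  "spike_sup X s x = Sup (insert 0 (range (\<lambda>n. spike X s n x)))"

lemma spike_sup_le: "(\<And>n. spike X s n x \<le> B) \<Longrightarrow> 0 \<le> B \<Longrightarrow> spike_sup X s x \<le> B"
  unfolding spike_sup_def by (intro cSup_least) auto

context
  fixes X :: "'a metric" and s :: "nat \<Rightarrow> 'a"
  assumes s: "range s \<subseteq> mspace X" and no_cluster: "\<And>p. \<not> cluster_point X s p"
begin

lemma spikes_eventually_negative:
  assumes p: "p \<in> mspace X"
  obtains r K where "r > 0"
    "\<And>x n. x \<in> mspace X \<Longrightarrow> mdist X p x < r \<Longrightarrow> K \<le> n \<Longrightarrow> spike X s n x < 0"
proof -
  have "\<exists>\<eta>>0. \<exists>N. \<forall>k\<ge>N. \<eta> \<le> mdist X (s k) p"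
    using no_cluster[of p] p unfolding cluster_point_def by (auto simp: not_less)
  then obtain \<eta> N where "\<eta> > 0" and far: "\<And>k. N \<le> k \<Longrightarrow> \<eta> \<le> mdist X (s k) p"
    by blast
  define K where "K = max N (Suc (nat \<lceil>2 / \<eta>\<rceil>))"
  show thesis
  proof (rule that[of "\<eta> / 2" K])
    show "\<eta> / 2 > 0"
      using \<open>\<eta> > 0\<close> by simp
    fix x n
    assume x: "x \<in> mspace X" "mdist X p x < \<eta> / 2" and "K \<le> n"
    have "\<eta> \<le> mdist X (s n) p"
      using far \<open>K \<le> n\<close> unfolding K_def by simp
    moreover have "mdist X (s n) p \<le> mdist X (s n) x + mdist X x p"
      using s x(1) p by (intro mdist_triangle) auto
    ultimately have dist_spike: "\<eta> / 2 < mdist X x (s n)"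
      using x(2) mdist_commute[of X x p] mdist_commute[of X x "s n"] by linarith
    have "2 / \<eta> < real n"
      using \<open>K \<le> n\<close> real_nat_ceiling_ge[of "2 / \<eta>"] unfolding K_def by linarith
    then have "1 < real n * (\<eta> / 2)"
      using \<open>\<eta> > 0\<close> by (simp add: field_simps)
    moreover have "0 < real n"
      using \<open>2 / \<eta> < real n\<close> \<open>\<eta> > 0\<close> by (smt (verit) divide_pos_pos)
    ultimately have "real n * 1 < real n * (real n * (\<eta> / 2))"
      by (intro mult_strict_left_mono)
    also have "\<dots> \<le> real n * (real n * mdist X x (s n))"
      using dist_spike by (intro mult_left_mono) auto
    finally show "spike X s n x < 0"
      unfolding spike_def by (simp add: mult.assoc)
  qed
qed

lemma spikes_bdd_above:
  assumes x: "x \<in> mspace X"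
  shows "bdd_above (insert 0 (range (\<lambda>n. spike X s n x)))"
proof -
  obtain r K where "r > 0"
    and negative: "\<And>y n. y \<in> mspace X \<Longrightarrow> mdist X x y < r \<Longrightarrow> K \<le> n \<Longrightarrow> spike X s n y < 0"
    using spikes_eventually_negative[OF x] by metis
  have "spike X s n x \<le> real K" for n
  proof (cases "K \<le> n")
    case True
    then show ?thesis
      using negative[OF x] x \<open>r > 0\<close> by fastforce
  next
    case False
    then have "real n \<le> real K"
      by simp
    moreover have "0 \<le> real n * real n * mdist X x (s n)"
      by simp
    ultimately show ?thesis
      unfolding spike_def by linarith
  qed
  then show ?thesis
    by (intro bdd_aboveI[of _ "real K"]) auto
qed

lemma spike_le_spike_sup: "x \<in> mspace X \<Longrightarrow> spike X s n x \<le> spike_sup X s x"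
  unfolding spike_sup_def using spikes_bdd_above by (auto intro: cSup_upper)

lemma spike_sup_nonneg: "x \<in> mspace X \<Longrightarrow> 0 \<le> spike_sup X s x"
  unfolding spike_sup_def using spikes_bdd_above by (auto intro: cSup_upper)

lemma spike_sup_at_sequence: "real n \<le> spike_sup X s (s n)"
  using spike_le_spike_sup[of "s n" n] s unfolding spike_def by auto

lemma spike_sup_one_sided_Lipschitz:
  assumes "p \<in> mspace X"
  obtains r K where "r > 0" "\<And>x y. x \<in> mspace X \<Longrightarrow> mdist X p x < r \<Longrightarrow> y \<in> mspace X \<Longrightarrow>
    spike_sup X s x \<le> spike_sup X s y + real K * real K * mdist X x y"
proof -
  obtain r K where "r > 0"
    and negative: "\<And>x n. x \<in> mspace X \<Longrightarrow> mdist X p x < r \<Longrightarrow> K \<le> n \<Longrightarrow> spike X s n x < 0"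
    using spikes_eventually_negative[OF assms] by metis
  have one_sided: "spike_sup X s x \<le> spike_sup X s y + real K * real K * mdist X x y"
    if x: "x \<in> mspace X" "mdist X p x < r" and y: "y \<in> mspace X" for x y
  proof (rule spike_sup_le)
    show "0 \<le> spike_sup X s y + real K * real K * mdist X x y"
      using spike_sup_nonneg[OF y] by simp
    fix n
    show "spike X s n x \<le> spike_sup X s y + real K * real K * mdist X x y"
    proof (cases "K \<le> n")
      case True
      then have "spike X s n x < 0"
        using negative x by blast
      moreover have "0 \<le> real K * real K * mdist X x y"
        by simp
      ultimately show ?thesis
        using spike_sup_nonneg[OF y] by linarith
    next
      case False
      have "mdist X y (s n) \<le> mdist X x y + mdist X x (s n)"
        using mdist_triangle[of y X x "s n"] s x y mdist_commute[of X x y] by auto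
      then have "real n * real n * mdist X y (s n) \<le>
          real n * real n * (mdist X x y + mdist X x (s n))"
        by (intro mult_left_mono) auto
      then have "spike X s n x \<le> spike X s n y + real n * real n * mdist X x y"
        unfolding spike_def distrib_left by linarith
      also have "\<dots> \<le> spike_sup X s y + real K * real K * mdist X x y"
        using spike_le_spike_sup[OF y] False by (intro add_mono mult_right_mono mult_mono) auto
      finally show ?thesis .
    qed
  qed
  show thesis
    by (rule that[OF \<open>r > 0\<close> one_sided])
qed

lemma locally_Lipschitz_spike_sup: "locally_Lipschitz X euclidean_metric (spike_sup X s)"
  unfolding locally_Lipschitz_def
proof (intro conjI ballI)
  fix p
  assume "p \<in> mspace X"
  then obtain r K where "r > 0" and one_sided: "\<And>x y. x \<in> mspace X \<Longrightarrow> mdist X p x < r \<Longrightarrow>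
      y \<in> mspace X \<Longrightarrow> spike_sup X s x \<le> spike_sup X s y + real K * real K * mdist X x y"
    using spike_sup_one_sided_Lipschitz by metis
  have "Lipschitz_continuous_map (submetric X (mball_of X p r)) euclidean_metric (spike_sup X s)"
    unfolding Lipschitz_continuous_map_def
  proof (intro conjI exI[of _ "real K * real K"] ballI)
    fix x y
    assume "x \<in> mspace (submetric X (mball_of X p r))" "y \<in> mspace (submetric X (mball_of X p r))"
    then have xy: "x \<in> mspace X" "mdist X p x < r" "y \<in> mspace X" "mdist X p y < r"
      by auto
    show "mdist euclidean_metric (spike_sup X s x) (spike_sup X s y) \<le>
        real K * real K * mdist (submetric X (mball_of X p r)) x y"
      using one_sided[OF xy(1,2,3)] one_sided[OF xy(3,4,1)] mdist_commute[of X x y]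
      by (simp add: dist_real_def abs_le_iff)
  qed simp
  then show "\<exists>\<delta>>0. Lipschitz_continuous_map (submetric X (mball_of X p \<delta>)) euclidean_metric (spike_sup X s)"
    using \<open>r > 0\<close> by blast
qed simp

end

lemma non_approximable_locally_Lipschitz_function:
  assumes bounded: "strongly_uniformly_locally_bounded X"
    and incomplete: "\<not> cofinally_Bourbaki_quasi_complete X"
  obtains f :: "'a \<Rightarrow> real" where "locally_Lipschitz X euclidean_metric f"
    "\<And>g :: 'a \<Rightarrow> real. strongly_uniformly_locally_Lipschitz X euclidean_metric g \<Longrightarrow>
       \<exists>x\<in>mspace X. 1 \<le> \<bar>f x - g x\<bar>"
proof -
  obtain s where s: "range s \<subseteq> mspace X" "cofinally_Bourbaki_quasi_Cauchy X s"
    and no_cluster: "\<And>p. \<not> cluster_point X s p"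
    using incomplete unfolding cofinally_Bourbaki_quasi_complete_def by blast
  show thesis
  proof (rule that[OF locally_Lipschitz_spike_sup[OF s(1) no_cluster]])
    fix g :: "'a \<Rightarrow> real"
    assume "strongly_uniformly_locally_Lipschitz X euclidean_metric g"
    then obtain N B where "infinite N"
      and g_bounded: "\<And>j k. j \<in> N \<Longrightarrow> k \<in> N \<Longrightarrow> dist (g (s j)) (g (s k)) \<le> B"
      using strongly_uniformly_locally_Lipschitz_bounded_on_cofinal_set[OF bounded s]
      by (metis mdist_euclidean_metric)
    show "\<exists>x\<in>mspace X. 1 \<le> \<bar>spike_sup X s x - g x\<bar>"
    proof (rule ccontr)
      assume "\<not> ?thesis"
      then have close: "\<bar>spike_sup X s x - g x\<bar> < 1" if "x \<in> mspace X" for x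
        using that by (auto simp: not_le)
      obtain i where "i \<in> N"
        using \<open>infinite N\<close> by (metis ex_in_conv infinite_imp_nonempty)
      obtain k where "k \<in> N" and k: "nat \<lceil>g (s i) + B + 1\<rceil> \<le> k"
        using \<open>infinite N\<close> unfolding infinite_nat_iff_unbounded_le by blast
      have "g (s k) \<le> g (s i) + B"
        using g_bounded[OF \<open>i \<in> N\<close> \<open>k \<in> N\<close>] by (simp add: dist_real_def)
      moreover have "s k \<in> mspace X"
        using s(1) by blast
      then have "spike_sup X s (s k) < g (s k) + 1"
        using close[OF \<open>s k \<in> mspace X\<close>] by (simp add: abs_less_iff)
      moreover have "g (s i) + B + 1 \<le> real k"
        using k by linarith
      ultimately show False
        using spike_sup_at_sequence[OF s(1) no_cluster, of k] by linarith
    qed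
  qed
qed

lemma cofinally_Bourbaki_quasi_completeI:
  assumes "strongly_uniformly_locally_bounded X"
    and "\<And>f :: 'a \<Rightarrow> real. locally_Lipschitz X euclidean_metric f \<Longrightarrow>
      \<exists>g. strongly_uniformly_locally_Lipschitz X euclidean_metric g \<and> (\<forall>x\<in>mspace X. \<bar>f x - g x\<bar> < 1)"
  shows "cofinally_Bourbaki_quasi_complete X"
proof (rule ccontr)
  assume "\<not> cofinally_Bourbaki_quasi_complete X"
  then obtain f :: "'a \<Rightarrow> real" where f: "locally_Lipschitz X euclidean_metric f"
    and far: "\<And>g :: 'a \<Rightarrow> real. strongly_uniformly_locally_Lipschitz X euclidean_metric g \<Longrightarrow>
      \<exists>x\<in>mspace X. 1 \<le> \<bar>f x - g x\<bar>"
    using non_approximable_locally_Lipschitz_function[OF assms(1)] by metis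
  obtain g where "strongly_uniformly_locally_Lipschitz X euclidean_metric g"
    and "\<forall>x\<in>mspace X. \<bar>f x - g x\<bar> < 1"
    using assms(2)[OF f] by blast
  with far show False
    by force
qed

lemma cofinally_Bourbaki_quasi_complete_iff_real_locally_Lipschitz_strongly:
  "cofinally_Bourbaki_quasi_complete X \<longleftrightarrow>
    strongly_uniformly_locally_bounded X \<and>
    (\<forall>f :: 'a \<Rightarrow> real. locally_Lipschitz X euclidean_metric f \<longrightarrow>
      strongly_uniformly_locally_Lipschitz X euclidean_metric f)"
proof (intro iffI conjI allI impI; (elim conjE)?)
  assume "cofinally_Bourbaki_quasi_complete X"
  then show "strongly_uniformly_locally_bounded X"
    by (rule cofinally_Bourbaki_quasi_complete_imp_strongly_uniformly_locally_bounded)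
next
  fix f :: "'a \<Rightarrow> real"
  assume "cofinally_Bourbaki_quasi_complete X" and "locally_Lipschitz X euclidean_metric f"
  then show "strongly_uniformly_locally_Lipschitz X euclidean_metric f"
    by (rule cofinally_Bourbaki_quasi_complete_imp_strongly_uniformly_locally_Lipschitz)
next
  assume bounded: "strongly_uniformly_locally_bounded X"
    and sull: "\<forall>f :: 'a \<Rightarrow> real. locally_Lipschitz X euclidean_metric f \<longrightarrow>
      strongly_uniformly_locally_Lipschitz X euclidean_metric f"
  show "cofinally_Bourbaki_quasi_complete X"
  proof (rule cofinally_Bourbaki_quasi_completeI[OF bounded])
    fix f :: "'a \<Rightarrow> real"
    assume "locally_Lipschitz X euclidean_metric f"
    then show "\<exists>g. strongly_uniformly_locally_Lipschitz X euclidean_metric g \<and>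
        (\<forall>x\<in>mspace X. \<bar>f x - g x\<bar> < 1)"
      using sull by (intro exI[of _ f]) simp
  qed
qed

lemma cofinally_Bourbaki_quasi_complete_iff_strongly_uniformly_locally_Lipschitz_dense:
  "cofinally_Bourbaki_quasi_complete X \<longleftrightarrow>
    strongly_uniformly_locally_bounded X \<and>
    (\<forall>f :: 'a \<Rightarrow> real. continuous_map (mtopology_of X) euclideanreal f \<longrightarrow>
      (\<forall>e>0. \<exists>g. strongly_uniformly_locally_Lipschitz X euclidean_metric g \<and>
        (\<forall>x\<in>mspace X. \<bar>f x - g x\<bar> < e)))"
proof (intro iffI conjI allI impI; (elim conjE)?)
  assume complete: "cofinally_Bourbaki_quasi_complete X"
  then show "strongly_uniformly_locally_bounded X"
    by (rule cofinally_Bourbaki_quasi_complete_imp_strongly_uniformly_locally_bounded)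
  fix f :: "'a \<Rightarrow> real" and e :: real
  assume "continuous_map (mtopology_of X) euclideanreal f" and "e > 0"
  then obtain g where "locally_Lipschitz X euclidean_metric g" "\<And>x. x \<in> mspace X \<Longrightarrow> \<bar>f x - g x\<bar> < e"
    using locally_Lipschitz_uniformly_dense by metis
  then show "\<exists>g. strongly_uniformly_locally_Lipschitz X euclidean_metric g \<and>
      (\<forall>x\<in>mspace X. \<bar>f x - g x\<bar> < e)"
    using cofinally_Bourbaki_quasi_complete_imp_strongly_uniformly_locally_Lipschitz[OF complete]
    by blast
next
  assume bounded: "strongly_uniformly_locally_bounded X"
    and dense: "\<forall>f :: 'a \<Rightarrow> real. continuous_map (mtopology_of X) euclideanreal f \<longrightarrow>
      (\<forall>e>0. \<exists>g. strongly_uniformly_locally_Lipschitz X euclidean_metric g \<and>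
        (\<forall>x\<in>mspace X. \<bar>f x - g x\<bar> < e))"
  show "cofinally_Bourbaki_quasi_complete X"
  proof (rule cofinally_Bourbaki_quasi_completeI[OF bounded])
    fix f :: "'a \<Rightarrow> real"
    assume "locally_Lipschitz X euclidean_metric f"
    then have "continuous_map (mtopology_of X) euclideanreal f"
      using locally_Lipschitz_imp_continuous_map[of X euclidean_metric f] by simp
    then show "\<exists>g. strongly_uniformly_locally_Lipschitz X euclidean_metric g \<and>
        (\<forall>x\<in>mspace X. \<bar>f x - g x\<bar> < 1)"
      using dense zero_less_one by blast
  qed
qed

theorem mainTheorem1:
  fixes X :: "'a metric"
  shows "(cofinally_Bourbaki_quasi_complete X \<longrightarrow> cond2 X TYPE('b))
   \<and> (cond2 X TYPE(real) \<longrightarrow> cofinally_Bourbaki_quasi_complete X)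
   \<and> (cofinally_Bourbaki_quasi_complete X \<longleftrightarrow>
        strongly_uniformly_locally_bounded X \<and>
        (\<forall>f::'a \<Rightarrow> real. locally_Lipschitz X euclidean_metric f \<longrightarrow>
            strongly_uniformly_locally_Lipschitz X euclidean_metric f))
   \<and> (cofinally_Bourbaki_quasi_complete X \<longleftrightarrow>
        strongly_uniformly_locally_bounded X \<and>
        (\<forall>f::'a \<Rightarrow> real. continuous_map (mtopology_of X) euclideanreal f \<longrightarrow>
            (\<forall>e>0. \<exists>g. strongly_uniformly_locally_Lipschitz X euclidean_metric g \<and>
                  (\<forall>x\<in>mspace X. \<bar>f x - g x\<bar> < e))))"
proof (intro conjI impI)
  show "cond2 X TYPE('b)" if "cofinally_Bourbaki_quasi_complete X"
    unfolding cond2_def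
    using cofinally_Bourbaki_quasi_complete_imp_strongly_uniformly_locally_bounded[OF that]
      cofinally_Bourbaki_quasi_complete_imp_strongly_uniformly_locally_Lipschitz[OF that] by blast
  show "cofinally_Bourbaki_quasi_complete X" if "cond2 X TYPE(real)"
    using that unfolding cond2_def cofinally_Bourbaki_quasi_complete_iff_real_locally_Lipschitz_strongly
    by blast
qed (fact cofinally_Bourbaki_quasi_complete_iff_real_locally_Lipschitz_strongly
    cofinally_Bourbaki_quasi_complete_iff_strongly_uniformly_locally_Lipschitz_dense)+

end
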